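(* Let $\mathbf m_1,\mathbf m_2,\mathbf m_3\in\mathbb R^3$ and $t_1,t_2,t_3\in\mathbb R$ with $\mathbf m_1\neq 0$, $\mathbf m_1\cdot\mathbf m_3=0$, and $\mathbf m_2,\mathbf m_3$ linearly independent, and let $$\mathbf A_1=\begin{bmatrix}\mathbf m_1^T & t_1\\ \mathbf 0^T & 1\end{bmatrix},\qquad \mathbf A_2=\begin{bmatrix}\mathbf m_2^T & t_2\\ \mathbf m_3^T & t_3\end{bmatrix}.$$ Then there exist unique reals $v>0$, $f>0$, $u$, unique unit vectors $\mathbf r_1,\mathbf r_2,\mathbf r_3\in\mathbb R^3$ with $\mathbf r_3\cdot\mathbf r_1=\mathbf r_3\cdot\mathbf r_2=0$, unique reals $t_1',t_2',t_3'$, and a unique scalar $c>0$ such that $$\mathbf A_1=\mathbf K_1\begin{bmatrix}\mathbf r_1^T & t_1'\\ \mathbf 0^T & 1\end{bmatrix},\qquad \mathbf A_2=c\,\mathbf K_2\begin{bmatrix}\mathbf r_2^T & t_2'\\ \mathbf r_3^T & t_3'\end{bmatrix},\qquad \mathbf K_1=\begin{bmatrix}1/v&0\\0&1\end{bmatrix},\ \mathbf K_2=\begin{bmatrix}f&u\\0&1\end{bmatrix}.$$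
   Context: A pair $(\mathbf A_1,\mathbf A_2)$ of $2\times4$ matrices represents the camera $\mathbf x\mapsto\big(\mathbf a_1^T\mathbf x/\mathbf a_2^T\mathbf x,\ \mathbf b_1^T\mathbf x/\mathbf b_2^T\mathbf x,\ 1\big)$ with $\mathbf a_i$, $\mathbf b_i$ the rows of $\mathbf A_1$, $\mathbf A_2$; when the second row of $\mathbf A_1$ is $(0,0,0,1)$ one slit (the null space of $\mathbf A_1$) lies in the plane at infinity, and the camera is called a (linear) pushbroom camera. *)

theory Defs
  imports "HOL-Analysis.Analysis"
begin

definition row4 :: "real^3 \<Rightarrow> real \<Rightarrow> real^4" where
  "row4 m t = vector [m$1, m$2, m$3, t]"

definition mat24 :: "real^4 \<Rightarrow> real^4 \<Rightarrow> real^4^2" where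
  "mat24 a b = vector [a, b]"

definition mat22 :: "real \<Rightarrow> real \<Rightarrow> real \<Rightarrow> real \<Rightarrow> real^2^2" where
  "mat22 a b c d = vector [vector [a, b], vector [c, d]]"

end

theory Submission
  imports Defs
begin

text \<open>Comparing rows, the factorization amounts to \<open>m1 = (1/v) r1\<close>, \<open>m3 = c r3\<close> and
\<open>m2 = c f r2 + c u r3\<close>. A nonzero vector is uniquely a positive multiple of a unit vector, which
fixes \<open>v, r1\<close> and \<open>c, r3\<close>; then \<open>u\<close> is read off from \<open>m2 \<bullet> r3\<close>, and the Gram--Schmidt
component of \<open>m2\<close> orthogonal to \<open>m3\<close>, nonzero by independence, fixes \<open>f, r2\<close>. The condition
\<open>r3 \<bullet> r1 = 0\<close> is then exactly \<open>m1 \<bullet> m3 = 0\<close>, and the translations solve linear equations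
with nonzero coefficients.\<close>

lemma row4_nth [simp]:
  "row4 m t $ 1 = m $ 1" "row4 m t $ 2 = m $ 2" "row4 m t $ 3 = m $ 3" "row4 m t $ 4 = t"
  unfolding row4_def vector_def by simp_all

lemma mat24_nth [simp]: "mat24 x y $ 1 = x" "mat24 x y $ 2 = y"
  unfolding mat24_def by simp_all

lemma mat22_nth [simp]:
  "mat22 a b c d $ 1 $ 1 = a" "mat22 a b c d $ 1 $ 2 = b"
  "mat22 a b c d $ 2 $ 1 = c" "mat22 a b c d $ 2 $ 2 = d"
  unfolding mat22_def by simp_all

lemma mat24_row4_eq_iff:
  "mat24 (row4 a s) (row4 b t) = mat24 (row4 a' s') (row4 b' t') \<longleftrightarrow>
     a = a' \<and> s = s' \<and> b = b' \<and> t = t'"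
  by (auto simp: vec_eq_iff forall_2 forall_3 forall_4)

lemma mat22_mult_mat24_row4:
  "mat22 a b c d ** mat24 (row4 r s) (row4 q w) =
     mat24 (row4 (a *\<^sub>R r + b *\<^sub>R q) (a * s + b * w)) (row4 (c *\<^sub>R r + d *\<^sub>R q) (c * s + d * w))"
  by (simp add: vec_eq_iff forall_2 forall_4 matrix_matrix_mult_def sum_2)

lemma scaleR_mat24_row4:
  "k *\<^sub>R mat24 (row4 r s) (row4 q w) = mat24 (row4 (k *\<^sub>R r) (k * s)) (row4 (k *\<^sub>R q) (k * w))"
  by (simp add: vec_eq_iff forall_2 forall_4)

lemma pushbroom_first_factor_eq_iff:
  "mat24 (row4 m t) (row4 0 1) = mat22 (1 / v) 0 0 1 ** mat24 (row4 r t') (row4 0 1) \<longleftrightarrow>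
     m = (1 / v) *\<^sub>R r \<and> t = t' / v"
  by (simp add: mat22_mult_mat24_row4 mat24_row4_eq_iff)

lemma pushbroom_second_factor_eq_iff:
  "mat24 (row4 m2 t2) (row4 m3 t3) = c *\<^sub>R (mat22 f u 0 1 ** mat24 (row4 r2 t2') (row4 r3 t3')) \<longleftrightarrow>
     m2 = (c * f) *\<^sub>R r2 + (c * u) *\<^sub>R r3 \<and> m3 = c *\<^sub>R r3 \<and>
     t2 = c * (f * t2' + u * t3') \<and> t3 = c * t3'"
  by (auto simp: mat22_mult_mat24_row4 scaleR_mat24_row4 mat24_row4_eq_iff algebra_simps)

lemma eq_pos_scaleR_unit_iff:
  fixes m r :: "'a::real_normed_vector"
  assumes "m \<noteq> 0"
  shows "(c > 0 \<and> norm r = 1 \<and> m = c *\<^sub>R r) \<longleftrightarrow> c = norm m \<and> r = sgn m"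
proof
  assume "c > 0 \<and> norm r = 1 \<and> m = c *\<^sub>R r"
  then have "r = inverse c *\<^sub>R m" and "c = norm m"
    by simp_all
  then show "c = norm m \<and> r = sgn m"
    by (simp add: sgn_div_norm divide_inverse_commute)
next
  assume "c = norm m \<and> r = sgn m"
  with assms show "c > 0 \<and> norm r = 1 \<and> m = c *\<^sub>R r"
    by (simp add: norm_sgn sgn_div_norm)
qed

lemma eq_orthonormal_pair_combination_iff:
  fixes m2 m3 r2 r3 :: "'a::real_inner"
  assumes "m3 \<noteq> 0" and "m2 \<notin> span {m3}"
  defines "q \<equiv> m2 - (m2 \<bullet> sgn m3) *\<^sub>R sgn m3"
  shows "(c > 0 \<and> f > 0 \<and> norm r2 = 1 \<and> norm r3 = 1 \<and> r3 \<bullet> r2 = 0 \<and>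
            m2 = (c * f) *\<^sub>R r2 + (c * u) *\<^sub>R r3 \<and> m3 = c *\<^sub>R r3) \<longleftrightarrow>
         c = norm m3 \<and> r3 = sgn m3 \<and> u = (m2 \<bullet> sgn m3) / norm m3 \<and> f = norm q / norm m3 \<and>
         r2 = sgn q"
    (is "?lhs \<longleftrightarrow> ?rhs")
proof -
  define e where "e = sgn m3"
  have c_r3_iff: "(c > 0 \<and> norm r3 = 1 \<and> m3 = c *\<^sub>R r3) \<longleftrightarrow> c = norm m3 \<and> r3 = e"
    using eq_pos_scaleR_unit_iff[OF assms(1)] unfolding e_def .
  have e_unit: "e \<bullet> e = 1"
    using assms(1) by (simp add: e_def norm_sgn flip: power2_norm_eq_inner)
  have m2_split: "m2 = q + (m2 \<bullet> e) *\<^sub>R e"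
    by (simp add: q_def e_def)
  show ?thesis
    unfolding e_def[symmetric]
  proof
    assume L: ?lhs
    then have "c > 0" "f > 0" "norm r2 = 1" "r3 \<bullet> r2 = 0"
      and m2: "m2 = (c * f) *\<^sub>R r2 + (c * u) *\<^sub>R r3"
      by blast+
    from L have c: "c = norm m3" and r3: "r3 = e"
      using c_r3_iff by blast+
    have "m2 \<bullet> e = c * u"
      using m2 r3 e_unit \<open>r3 \<bullet> r2 = 0\<close> by (simp add: inner_add_left inner_add_right inner_commute)
    then have u: "u = (m2 \<bullet> e) / c"
      using \<open>c > 0\<close> by simp
    have "q = (c * f) *\<^sub>R r2"
      using m2 r3 \<open>m2 \<bullet> e = c * u\<close> by (simp add: q_def[folded e_def])
    moreover have "sgn r2 = r2"
      using \<open>norm r2 = 1\<close> by (simp add: sgn_div_norm)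
    ultimately have "norm q = c * f" "sgn q = r2"
      using \<open>c > 0\<close> \<open>f > 0\<close> \<open>norm r2 = 1\<close> by (simp_all add: sgn_scaleR)
    with c r3 u \<open>c > 0\<close>
    show "c = norm m3 \<and> r3 = e \<and> u = (m2 \<bullet> e) / norm m3 \<and> f = norm q / norm m3 \<and> r2 = sgn q"
      by simp
  next
    assume R: "c = norm m3 \<and> r3 = e \<and> u = (m2 \<bullet> e) / norm m3 \<and> f = norm q / norm m3 \<and> r2 = sgn q"
    then have "c > 0" "norm r3 = 1" "m3 = c *\<^sub>R r3"
      using c_r3_iff by blast+
    from R \<open>c > 0\<close> have r3: "r3 = e" and r2: "r2 = sgn q"
      and cf: "c * f = norm q" and cu: "c * u = m2 \<bullet> e"
      by auto
    have "q \<noteq> 0"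
    proof
      assume "q = 0"
      have "e \<in> span {m3}"
        by (simp add: e_def sgn_div_norm span_base span_scale)
      with \<open>q = 0\<close> have "m2 \<in> span {m3}"
        by (metis m2_split add_0 span_scale)
      with assms(2) show False ..
    qed
    then have "f > 0"
      using cf \<open>c > 0\<close> by (metis zero_less_mult_pos zero_less_norm_iff)
    have "norm r2 = 1"
      using \<open>q \<noteq> 0\<close> r2 by (simp add: norm_sgn)
    have "e \<bullet> q = 0"
      using e_unit by (simp add: q_def e_def[symmetric] inner_diff_right inner_commute)
    then have "r3 \<bullet> r2 = 0"
      using r3 r2 by (simp add: sgn_div_norm)
    have "m2 = (c * f) *\<^sub>R r2 + (c * u) *\<^sub>R r3"
      using m2_split \<open>q \<noteq> 0\<close> by (simp add: cf cu r2 r3 sgn_div_norm)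
    with \<open>c > 0\<close> \<open>f > 0\<close> \<open>norm r2 = 1\<close> \<open>norm r3 = 1\<close> \<open>r3 \<bullet> r2 = 0\<close> \<open>m3 = c *\<^sub>R r3\<close>
    show ?lhs
      by blast
  qed
qed

lemma eq_scaled_unit_translation_iff:
  fixes m r :: "'a::real_normed_vector"
  assumes "m \<noteq> 0"
  shows "(v > 0 \<and> norm r = 1 \<and> m = (1 / v) *\<^sub>R r \<and> t = t' / v) \<longleftrightarrow>
         v = 1 / norm m \<and> r = sgn m \<and> t' = t / norm m"
proof -
  have "(v > 0 \<and> norm r = 1 \<and> m = (1 / v) *\<^sub>R r) \<longleftrightarrow> v = 1 / norm m \<and> r = sgn m"
    using eq_pos_scaleR_unit_iff[OF assms, of "1 / v" r]
    by (metis zero_less_divide_1_iff inverse_eq_divide inverse_inverse_eq)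
  moreover have "v = 1 / norm m \<Longrightarrow> t = t' / v \<longleftrightarrow> t' = t / norm m"
    using assms by auto
  ultimately show ?thesis
    by blast
qed

lemma eq_orthonormal_pair_translation_iff:
  fixes m2 m3 r2 r3 :: "'a::real_inner"
  assumes "m3 \<noteq> 0" and "m2 \<notin> span {m3}"
  defines "q \<equiv> m2 - (m2 \<bullet> sgn m3) *\<^sub>R sgn m3"
  shows "(c > 0 \<and> f > 0 \<and> norm r2 = 1 \<and> norm r3 = 1 \<and> r3 \<bullet> r2 = 0 \<and>
            m2 = (c * f) *\<^sub>R r2 + (c * u) *\<^sub>R r3 \<and> m3 = c *\<^sub>R r3 \<and>
            t2 = c * (f * t2' + u * t3') \<and> t3 = c * t3') \<longleftrightarrow>
         c = norm m3 \<and> r3 = sgn m3 \<and> u = (m2 \<bullet> sgn m3) / norm m3 \<and> f = norm q / norm m3 \<and>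
         r2 = sgn q \<and> t3' = t3 / norm m3 \<and> t2' = (t2 / norm m3 - u * t3') / f"
proof -
  note vectors_iff = eq_orthonormal_pair_combination_iff[OF assms(1,2), of c f r2 r3 u, folded q_def]
  have "t2 = c * (f * t2' + u * t3') \<and> t3 = c * t3' \<longleftrightarrow>
      t3' = t3 / c \<and> t2' = (t2 / c - u * t3') / f" if "c > 0" "f > 0"
    using that by (auto simp: field_simps)
  with vectors_iff show ?thesis
    by (metis (no_types, lifting))
qed

lemma pushbroom_factorization_iff:
  fixes m1 m2 m3 r1 r2 r3 :: "real^3"
  assumes "m1 \<noteq> 0" and "m1 \<bullet> m3 = 0" and "m3 \<noteq> 0" and "m2 \<notin> span {m3}"
  defines "q \<equiv> m2 - (m2 \<bullet> sgn m3) *\<^sub>R sgn m3"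
  shows "(v > 0 \<and> f > 0 \<and> norm r1 = 1 \<and> norm r2 = 1 \<and> norm r3 = 1 \<and>
           r3 \<bullet> r1 = 0 \<and> r3 \<bullet> r2 = 0 \<and> c > 0 \<and>
           mat24 (row4 m1 t1) (row4 0 1) = mat22 (1 / v) 0 0 1 ** mat24 (row4 r1 t1') (row4 0 1) \<and>
           mat24 (row4 m2 t2) (row4 m3 t3) =
             c *\<^sub>R (mat22 f u 0 1 ** mat24 (row4 r2 t2') (row4 r3 t3'))) \<longleftrightarrow>
         v = 1 / norm m1 \<and> f = norm q / norm m3 \<and> u = (m2 \<bullet> sgn m3) / norm m3 \<and>
         r1 = sgn m1 \<and> r2 = sgn q \<and> r3 = sgn m3 \<and> t1' = t1 / norm m1 \<and>
         t2' = (t2 / norm m3 - u * t3') / f \<and> t3' = t3 / norm m3 \<and> c = norm m3"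
    (is "?lhs \<longleftrightarrow> ?rhs")
proof -
  have "sgn m3 \<bullet> sgn m1 = 0"
    using assms(2) by (simp add: sgn_div_norm inner_commute)
  have "?lhs \<longleftrightarrow>
        (v > 0 \<and> norm r1 = 1 \<and> m1 = (1 / v) *\<^sub>R r1 \<and> t1 = t1' / v) \<and> r3 \<bullet> r1 = 0 \<and>
        (c > 0 \<and> f > 0 \<and> norm r2 = 1 \<and> norm r3 = 1 \<and> r3 \<bullet> r2 = 0 \<and>
          m2 = (c * f) *\<^sub>R r2 + (c * u) *\<^sub>R r3 \<and> m3 = c *\<^sub>R r3 \<and>
          t2 = c * (f * t2' + u * t3') \<and> t3 = c * t3')"
    unfolding pushbroom_first_factor_eq_iff pushbroom_second_factor_eq_iff
    by auto
  also have "\<dots> \<longleftrightarrow>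
      (v = 1 / norm m1 \<and> r1 = sgn m1 \<and> t1' = t1 / norm m1) \<and> r3 \<bullet> r1 = 0 \<and>
      (c = norm m3 \<and> r3 = sgn m3 \<and> u = (m2 \<bullet> sgn m3) / norm m3 \<and> f = norm q / norm m3 \<and>
        r2 = sgn q \<and> t3' = t3 / norm m3 \<and> t2' = (t2 / norm m3 - u * t3') / f)"
    unfolding eq_scaled_unit_translation_iff[OF assms(1)]
      eq_orthonormal_pair_translation_iff[OF assms(3,4), folded q_def] ..
  also have "\<dots> \<longleftrightarrow> ?rhs"
    using \<open>sgn m3 \<bullet> sgn m1 = 0\<close> by auto
  finally show ?thesis .
qed

theorem mainTheorem3:
  fixes m1 m2 m3 :: "real^3" and t1 t2 t3 :: real
  assumes "m1 \<noteq> 0" and "m1 \<bullet> m3 = 0" and "independent {m2, m3}" and "m2 \<noteq> m3"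
  defines "A1 \<equiv> mat24 (row4 m1 t1) (row4 0 1)"
      and "A2 \<equiv> mat24 (row4 m2 t2) (row4 m3 t3)"
  shows "\<exists>!p :: real \<times> real \<times> real \<times> (real^3) \<times> (real^3) \<times> (real^3) \<times> real \<times> real \<times> real \<times> real.
           case p of (v, f, u, r1, r2, r3, t1', t2', t3', c) \<Rightarrow>
             v > 0 \<and> f > 0 \<and> norm r1 = 1 \<and> norm r2 = 1 \<and> norm r3 = 1 \<and>
             r3 \<bullet> r1 = 0 \<and> r3 \<bullet> r2 = 0 \<and> c > 0 \<and>
             A1 = mat22 (1 / v) 0 0 1 ** mat24 (row4 r1 t1') (row4 0 1) \<and>
             A2 = c *\<^sub>R (mat22 f u 0 1 ** mat24 (row4 r2 t2') (row4 r3 t3'))"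
proof -
  have "m3 \<noteq> 0"
    using assms(3) dependent_zero by blast
  have "m2 \<notin> span {m3}"
    using assms(3,4) by (simp add: independent_insert)
  define q where "q = m2 - (m2 \<bullet> sgn m3) *\<^sub>R sgn m3"
  define f u t3' where "f = norm q / norm m3" and "u = (m2 \<bullet> sgn m3) / norm m3"
    and "t3' = t3 / norm m3"
  note factorization_iff = pushbroom_factorization_iff[OF assms(1,2) \<open>m3 \<noteq> 0\<close> \<open>m2 \<notin> span {m3}\<close>,
      folded q_def]
  show ?thesis
    unfolding A1_def A2_def
    by (rule ex1I[of _ "(1 / norm m1, f, u, sgn m1, sgn q, sgn m3, t1 / norm m1,
                         (t2 / norm m3 - u * t3') / f, t3', norm m3)"])
      (simp_all only: split_paired_all prod.case factorization_iff, auto simp: f_def u_def t3'_def)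
qed

end
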